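(* Let $V=V(\alpha_1)\otimes\cdots\otimes V(\alpha_d)$ be a standard $U_q(\widehat{\mathfrak{sl}}_2)$-module with feasible diameter $d\ge1$. Let $\zeta_1$ be the scalar by which $LR$ acts on $U_0$ and $\zeta_1^\times$ the scalar by which $RL$ acts on $U_d$. Then (i) $\zeta_1=uu^*q^{-1}\sum_{i=1}^d\alpha_i+vv^*q^3\sum_{i=1}^d\alpha_i^{-1}-(q-q^{-1})(q^d-q^{-d})(bb^*q^{1-d}+cc^*q^{d-1})$; (ii) $\zeta_1^\times=uu^*q^{-1}\sum_{i=1}^d\alpha_i+vv^*q^3\sum_{i=1}^d\alpha_i^{-1}-(q-q^{-1})(q^d-q^{-d})(bb^*q^{d-1}+cc^*q^{1-d})$; (iii) $\zeta_1-\zeta_1^\times=(q-q^{-1})(q^{d-1}-q^{1-d})(q^d-q^{-d})(bb^*-cc^* )$.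
   Context: Let $\mathbb F$ be an algebraically closed field and fix nonzero $q\in\mathbb F$ with $q^2\ne1$; write $[n]_q=(q^n-q^{-n})/(q-q^{-1})$. $U_q(\widehat{\mathfrak{sl}}_2)$ is the associative unital $\mathbb F$-algebra with generators $e_i^{\pm},K_i^{\pm1}$ ($i\in\{0,1\}$) and relations $K_iK_i^{-1}=K_i^{-1}K_i=1$, $K_0K_1=K_1K_0$, $K_ie_i^{\pm}K_i^{-1}=q^{\pm2}e_i^{\pm}$, $K_ie_j^{\pm}K_i^{-1}=q^{\mp2}e_j^{\pm}$ ($i\ne j$), $e_i^+e_i^--e_i^-e_i^+=(K_i-K_i^{-1})/(q-q^{-1})$, $e_0^{\pm}e_1^{\mp}=e_1^{\mp}e_0^{\pm}$, and $(e_i^\pm)^3e_j^\pm-[3]_q(e_i^\pm)^2e_j^\pm e_i^\pm+[3]_qe_i^\pm e_j^\pm(e_i^\pm)^2-e_j^\pm(e_i^\pm)^3=0$ ($i\ne j$). Tensor products of modules are formed via $e_i^+(v\otimes w)=e_i^+v\otimes K_iw+v\otimes e_i^+w$, $e_i^-(v\otimes w)=e_i^-v\otimes w+K_i^{-1}v\otimes e_i^-w$, $K_i(v\otimes w)=K_iv\otimes K_iw$. For nonzero $\alpha\in\mathbb F$, $V(\alpha)$ is the module with basis $x,y$ and $K_1x=qx$, $K_1y=q^{-1}y$, $e_1^-x=y$, $e_1^-y=0$, $e_1^+x=0$, $e_1^+y=x$, $K_0x=q^{-1}x$, $K_0y=qy$, $e_0^-x=0$, $e_0^-y=q\alpha^{-1}x$,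 $e_0^+x=q^{-1}\alpha y$, $e_0^+y=0$. A standard module of diameter $d$ is $V(\alpha_1)\otimes\cdots\otimes V(\alpha_d)$ with all $\alpha_i\in\mathbb F$ nonzero. An integer $d$ is feasible if $d\ge0$ and $q^{2i}\ne1$ for $1\le i\le d$. For a standard $V$ of diameter $d$, $U_0$ is the $1$-dimensional span of $x\otimes\cdots\otimes x$ and $U_d$ the $1$-dimensional span of $y\otimes\cdots\otimes y$. Fix nonzero $b,c,b^*,c^*\in\mathbb F$ and $u,v,u^*,v^*\in\mathbb F$ with $uv^*=-bb^*q^{-1}(q-q^{-1})^2$ and $vu^*=-cc^*q^{-1}(q-q^{-1})^2$; set $R=ue_0^++ve_1^-K_1$ and $L=u^*e_1^++v^*e_0^-K_0$. ($LR$ maps $U_0$ into itself and $RL$ maps $U_d$ into itself.) *)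

theory Defs
  imports "HOL-Computational_Algebra.Polynomial"
begin

text \<open>Generators of U_q(affine sl2) acting on modules.
 Basis of V(alpha): True = x, False = y. A vector of a tensor product of d copies
 is a coefficient function on words (bool lists of length d).\<close>

datatype gen = E0p | E0m | E1p | E1m | K0 | K1 | K0i | K1i

definition delta :: "'b \<Rightarrow> 'b \<Rightarrow> 'a::field" where
  "delta b c = (if b = c then 1 else 0)"

fun single :: "'a::field \<Rightarrow> 'a \<Rightarrow> gen \<Rightarrow> bool \<Rightarrow> bool \<Rightarrow> 'a" where
  "single q a K1 b = (\<lambda>c. (if b then q else inverse q) * delta b c)"
| "single q a K1i b = (\<lambda>c. (if b then inverse q else q) * delta b c)"
| "single q a K0 b = (\<lambda>c. (if b then inverse q else q) * delta b c)"
| "single q a K0i b = (\<lambda>c. (if b then q else inverse q) * delta b c)"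
| "single q a E1m b = (if b then delta False else (\<lambda>_. 0))"
| "single q a E1p b = (if b then (\<lambda>_. 0) else delta True)"
| "single q a E0m b = (if b then (\<lambda>_. 0) else (\<lambda>c. q * inverse a * delta True c))"
| "single q a E0p b = (if b then (\<lambda>c. inverse q * a * delta False c) else (\<lambda>_. 0))"

definition tens :: "(bool \<Rightarrow> 'a::field) \<Rightarrow> (bool list \<Rightarrow> 'a) \<Rightarrow> bool list \<Rightarrow> 'a" where
  "tens v u w = (case w of [] \<Rightarrow> 0 | c # w' \<Rightarrow> v c * u w')"

definition kinv :: "gen \<Rightarrow> gen" where
  "kinv g = (case g of E0p \<Rightarrow> K0 | E0m \<Rightarrow> K0i | E1p \<Rightarrow> K1 | E1m \<Rightarrow> K1i | h \<Rightarrow> h)"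

text \<open>Action of generator g on the basis word w of V(a1) (x) (V(a2) (x) ... ), using
 the given coproduct; the empty tensor product is the trivial module
 (K_i act as 1, e_i act as 0).\<close>
fun act :: "'a::field \<Rightarrow> 'a list \<Rightarrow> gen \<Rightarrow> bool list \<Rightarrow> bool list \<Rightarrow> 'a" where
  "act q [] g [] = (if g \<in> {K0, K1, K0i, K1i} then delta [] else (\<lambda>_. 0))"
| "act q (a # as) g (b # w) =
     (if g \<in> {K0, K1, K0i, K1i} then tens (single q a g b) (act q as g w)
      else if g \<in> {E0p, E1p}
        then (\<lambda>w'. tens (single q a g b) (act q as (kinv g) w) w'
                 + tens (delta b) (act q as g w) w')
        else (\<lambda>w'. tens (single q a g b) (delta w) w'
                 + tens (single q a (kinv g) b) (act q as g w) w'))"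
| "act q _ g _ = (\<lambda>_. 0)"

definition lin :: "'a::field \<Rightarrow> 'a list \<Rightarrow> gen \<Rightarrow> (bool list \<Rightarrow> 'a) \<Rightarrow> bool list \<Rightarrow> 'a" where
  "lin q as g f = (\<lambda>w'. \<Sum>w\<in>{w. length w = length as}. f w * act q as g w w')"

definition Rop :: "'a::field \<Rightarrow> 'a list \<Rightarrow> 'a \<Rightarrow> 'a \<Rightarrow> (bool list \<Rightarrow> 'a) \<Rightarrow> bool list \<Rightarrow> 'a" where
  "Rop q as u v f = (\<lambda>w. u * lin q as E0p f w + v * lin q as E1m (lin q as K1 f) w)"

definition Lop :: "'a::field \<Rightarrow> 'a list \<Rightarrow> 'a \<Rightarrow> 'a \<Rightarrow> (bool list \<Rightarrow> 'a) \<Rightarrow> bool list \<Rightarrow> 'a" where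
  "Lop q as us vs f = (\<lambda>w. us * lin q as E1p f w + vs * lin q as E0m (lin q as K0 f) w)"

definition feasible :: "'a::field \<Rightarrow> nat \<Rightarrow> bool" where
  "feasible q d \<longleftrightarrow> (\<forall>i\<in>{1..d}. q ^ (2 * i) \<noteq> 1)"

end

theory Submission
  imports Defs
begin

(* A vector of the standard module V(a1) (x) ... (x) V(ad) is a coefficient
   function on words of length d; every such vector splits along the first tensor factor
   as  x (x) F1 + y (x) F0  (split_vec).  The coproduct expresses the action of each
   generator on a split vector through the actions on the remaining d-1 factors, so R and
   L satisfy explicit recursions in the list of evaluation parameters.

   The extremal vectors x0 = x(x)...(x)x and yd = y(x)...(x)y are eigenvectors of K0 and K1,
   and L x0 = 0, R yd = 0.  With these facts, induction on d shows that x0 and yd are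
   eigenvectors of LR resp. RL, with eigenvalues lr_value, rl_value accumulated factor by
   factor.  The relations u v* = -b b* q^-1 (q-q^-1)^2 and v u* = -c c* q^-1 (q-q^-1)^2 make
   the contribution of each factor the increment of a boundary term under P := qP, so the
   eigenvalues telescope to the closed form zeta_formula. *)

lemma finite_words: "finite {w::bool list. length w = n}"
  using finite_lists_length_eq[of "UNIV::bool set" n] by simp

lemma sum_words_Suc:
  "(\<Sum>w\<in>{w::bool list. length w = Suc n}. f w) =
   (\<Sum>w\<in>{w. length w = n}. f (True#w)) + (\<Sum>w\<in>{w. length w = n}. f (False#w))"
proof -
  let ?S = "{w::bool list. length w = n}"
  have split: "{w::bool list. length w = Suc n} = Cons True ` ?S \<union> Cons False ` ?S"
    by (auto simp: length_Suc_conv image_def)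
  have "(\<Sum>w\<in>Cons True ` ?S \<union> Cons False ` ?S. f w)
      = (\<Sum>w\<in>Cons True ` ?S. f w) + (\<Sum>w\<in>Cons False ` ?S. f w)"
    using finite_words by (intro sum.union_disjoint) auto
  also have "\<dots> = (\<Sum>w\<in>?S. f (True#w)) + (\<Sum>w\<in>?S. f (False#w))"
    by (simp add: sum.reindex)
  finally show ?thesis using split by simp
qed

definition split_vec :: "(bool list \<Rightarrow> 'a::field) \<Rightarrow> (bool list \<Rightarrow> 'a) \<Rightarrow> bool list \<Rightarrow> 'a" where
  "split_vec F1 F0 = (\<lambda>w. case w of [] \<Rightarrow> 0 | c # w' \<Rightarrow> if c then F1 w' else F0 w')"

lemma split_vec_simps [simp]:
  "split_vec F1 F0 [] = 0" "split_vec F1 F0 (True#w) = F1 w" "split_vec F1 F0 (False#w) = F0 w"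
  by (simp_all add: split_vec_def)

lemma split_vec_eqI:
  assumes "G [] = 0" "\<And>w. G (True#w) = A w" "\<And>w. G (False#w) = B w"
  shows "G = split_vec A B"
proof
  fix w show "G w = split_vec A B w"
    using assms by (cases w) (auto simp: split_vec_def split: bool.splits)
qed

lemma split_vec_zero [simp]: "split_vec (\<lambda>w. 0) (\<lambda>w. 0) = (\<lambda>w. 0)"
  by (rule split_vec_eqI[symmetric]) auto

lemma split_vec_scale: "(\<lambda>w. k * split_vec A B w) = split_vec (\<lambda>w. k * A w) (\<lambda>w. k * B w)"
  by (rule split_vec_eqI) auto

lemma split_vec_scale_at: "k * split_vec A B w = split_vec (\<lambda>w. k * A w) (\<lambda>w. k * B w) w"
  by (cases w) (auto simp: split_vec_def)

lemma act_length: "length w = length as \<Longrightarrow> length w' \<noteq> length as \<Longrightarrow> act q as g w w' = 0"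
proof (induction as arbitrary: w w' g)
  case Nil then show ?case by (auto simp: delta_def)
next
  case (Cons a as)
  then obtain b w0 where w: "w = b # w0" "length w0 = length as" by (cases w) auto
  show ?case
  proof (cases w')
    case Nil then show ?thesis using w by (simp add: tens_def)
  next
    case (Cons c w1)
    then have "length w1 \<noteq> length as" using Cons.prems by simp
    then show ?thesis using w Cons Cons.IH[of w0 w1] by (auto simp: tens_def delta_def)
  qed
qed

lemma lin_support: "length w' \<noteq> length as \<Longrightarrow> lin q as g F w' = 0"
  by (simp add: lin_def act_length)

lemma lin_restrict [simp]: "(if length w = length as then lin q as g F w else 0) = lin q as g F w"
  using lin_support by auto

lemma lin_scale [simp]: "lin q as g (\<lambda>w. k * F w) = (\<lambda>w. k * lin q as g F w)"
  by (simp add: lin_def sum_distrib_left mult_ac)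

lemma lin_zero [simp]: "lin q as g (\<lambda>w. 0) = (\<lambda>w. 0)"
  by (simp add: lin_def)

lemma lin_Nil: "lin q [] g F = (\<lambda>w'. F [] * act q [] g [] w')"
proof -
  have "{w::bool list. length w = 0} = {[]}" by auto
  then show ?thesis by (simp add: lin_def)
qed

lemma act_Cons_at_Nil: "act q (a#as) g (b#w) [] = 0"
  by (simp add: tens_def)

lemma lin_Cons_at_Nil: "lin q (a#as) g F [] = 0"
  by (simp add: lin_def sum_words_Suc act_Cons_at_Nil del: act.simps)

lemma lin_Cons_at_Cons: "lin q (a#as) g F (c#w') =
   (\<Sum>w\<in>{w. length w = length as}.
      F (True#w) * act q (a#as) g (True#w) (c#w') + F (False#w) * act q (a#as) g (False#w) (c#w'))"
  by (simp add: lin_def sum_words_Suc sum.distrib)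

section \<open>The coproduct on split vectors\<close>

lemma mult_if_zero: "(x::'a::field) * (if P then y else 0) = (if P then x * y else 0)"
  by simp

lemma lin_K1_split: "lin q (a#as) K1 (split_vec F1 F0) =
    split_vec (\<lambda>w. q * lin q as K1 F1 w) (\<lambda>w. inverse q * lin q as K1 F0 w)"
  by (rule split_vec_eqI) (simp_all only: lin_Cons_at_Nil lin_Cons_at_Cons,
      auto simp: tens_def delta_def lin_def sum_distrib_left mult_ac)

lemma lin_K0_split: "lin q (a#as) K0 (split_vec F1 F0) =
    split_vec (\<lambda>w. inverse q * lin q as K0 F1 w) (\<lambda>w. q * lin q as K0 F0 w)"
  by (rule split_vec_eqI) (simp_all only: lin_Cons_at_Nil lin_Cons_at_Cons,
      auto simp: tens_def delta_def lin_def sum_distrib_left mult_ac)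

lemma lin_E0p_split: "lin q (a#as) E0p (split_vec F1 F0) =
    split_vec (\<lambda>w. lin q as E0p F1 w) (\<lambda>w. inverse q * a * lin q as K0 F1 w + lin q as E0p F0 w)"
  by (rule split_vec_eqI) (simp_all only: lin_Cons_at_Nil lin_Cons_at_Cons,
      auto simp: tens_def delta_def lin_def sum_distrib_left mult_ac kinv_def sum.distrib
        if_distrib cong: if_cong)

lemma lin_E1p_split: "lin q (a#as) E1p (split_vec F1 F0) =
    split_vec (\<lambda>w. lin q as K1 F0 w + lin q as E1p F1 w) (\<lambda>w. lin q as E1p F0 w)"
  by (rule split_vec_eqI) (simp_all only: lin_Cons_at_Nil lin_Cons_at_Cons,
      auto simp: tens_def delta_def lin_def sum_distrib_left mult_ac kinv_def sum.distrib
        if_distrib cong: if_cong)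

lemma lin_E0m_split: "lin q (a#as) E0m (split_vec F1 F0) =
    split_vec (\<lambda>w. q * inverse a * (if length w = length as then F0 w else 0) + q * lin q as E0m F1 w)
              (\<lambda>w. inverse q * lin q as E0m F0 w)"
  by (rule split_vec_eqI) (simp_all only: lin_Cons_at_Nil lin_Cons_at_Cons,
      simp_all add: tens_def lin_def kinv_def sum.distrib ring_distribs sum_distrib_left,
      simp_all add: delta_def mult_if_zero sum.delta sum.delta' finite_words mult_ac)

lemma lin_E1m_split: "lin q (a#as) E1m (split_vec F1 F0) =
    split_vec (\<lambda>w. inverse q * lin q as E1m F1 w)
              (\<lambda>w. (if length w = length as then F1 w else 0) + q * lin q as E1m F0 w)"
  by (rule split_vec_eqI) (simp_all only: lin_Cons_at_Nil lin_Cons_at_Cons,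
      simp_all add: tens_def lin_def kinv_def sum.distrib ring_distribs sum_distrib_left,
      simp_all add: delta_def mult_if_zero sum.delta sum.delta' finite_words mult_ac)

lemma Rop_split: "q \<noteq> 0 \<Longrightarrow> Rop q (a#as) u v (split_vec F1 F0) = split_vec (Rop q as u v F1)
   (\<lambda>w. u * inverse q * a * lin q as K0 F1 w + v * q * lin q as K1 F1 w + Rop q as u v F0 w)"
  unfolding Rop_def lin_K1_split lin_E0p_split lin_E1m_split lin_scale lin_restrict
  by (rule split_vec_eqI) (auto simp: algebra_simps lin_support)

lemma Lop_split: "q \<noteq> 0 \<Longrightarrow> Lop q (a#as) us vs (split_vec F1 F0) = split_vec
   (\<lambda>w. Lop q as us vs F1 w + us * lin q as K1 F0 w + vs * q^2 * inverse a * lin q as K0 F0 w)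
   (Lop q as us vs F0)"
  unfolding Lop_def lin_K0_split lin_E0m_split lin_E1p_split lin_scale lin_restrict
  by (rule split_vec_eqI) (auto simp: algebra_simps power2_eq_square lin_support)

lemma Rop_scale [simp]: "Rop q as u v (\<lambda>w. k * F w) = (\<lambda>w. k * Rop q as u v F w)"
  by (simp add: Rop_def algebra_simps)

lemma Lop_scale [simp]: "Lop q as u v (\<lambda>w. k * F w) = (\<lambda>w. k * Lop q as u v F w)"
  by (simp add: Lop_def algebra_simps)

lemma Rop_zero [simp]: "Rop q as u v (\<lambda>w. 0) = (\<lambda>w. 0)"
  by (simp add: Rop_def)

lemma Lop_zero [simp]: "Lop q as u v (\<lambda>w. 0) = (\<lambda>w. 0)"
  by (simp add: Lop_def)

lemma Rop_Nil: "Rop q [] u v F = (\<lambda>w. 0)"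
  by (simp add: Rop_def lin_Nil)

lemma Lop_Nil: "Lop q [] u v F = (\<lambda>w. 0)"
  by (simp add: Lop_def lin_Nil)

text \<open>extremal as True is x0 and extremal as False is yd, for the factors listed in as.\<close>
abbreviation extremal :: "'a list \<Rightarrow> bool \<Rightarrow> bool list \<Rightarrow> 'b::field" where
  "extremal as b \<equiv> delta (replicate (length as) b)"

lemma delta_replicate_Cons:
  "delta (True # replicate n True) = split_vec (delta (replicate n True)) (\<lambda>w. 0)"
  "delta (False # replicate n False) = split_vec (\<lambda>w. 0) (delta (replicate n False))"
  by (rule split_vec_eqI; auto simp: delta_def)+

lemma K1_extremal:
  "lin q as K1 (extremal as b) = (\<lambda>w. (if b then q else inverse q) ^ length as * extremal as b w)"
proof (induction as)
  case Nil then show ?case by (auto simp: lin_Nil delta_def)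
next
  case (Cons a as) then show ?case
    by (cases b) (simp_all add: delta_replicate_Cons lin_K1_split split_vec_scale_at mult.assoc)
qed

lemma K0_extremal:
  "lin q as K0 (extremal as b) = (\<lambda>w. (if b then inverse q else q) ^ length as * extremal as b w)"
proof (induction as)
  case Nil then show ?case by (auto simp: lin_Nil delta_def)
next
  case (Cons a as) then show ?case
    by (cases b) (simp_all add: delta_replicate_Cons lin_K0_split split_vec_scale_at mult.assoc)
qed

lemma Lop_top: "q \<noteq> 0 \<Longrightarrow> Lop q as us vs (extremal as True) = (\<lambda>w. 0)"
  by (induction as) (simp_all add: Lop_Nil delta_replicate_Cons Lop_split)

lemma Rop_bottom: "q \<noteq> 0 \<Longrightarrow> Rop q as u v (extremal as False) = (\<lambda>w. 0)"
  by (induction as) (simp_all add: Rop_Nil delta_replicate_Cons Rop_split)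

section \<open>LR on x0 and RL on yd\<close>

text \<open>Eigenvalues of LR on x0 and of RL on yd, accumulated factor by factor: the new
  first factor V(a) contributes the product of the coefficients produced by R and by L.\<close>
fun lr_value :: "'a::field \<Rightarrow> 'a \<Rightarrow> 'a \<Rightarrow> 'a \<Rightarrow> 'a \<Rightarrow> 'a list \<Rightarrow> 'a" where
  "lr_value q u v us vs [] = 0"
| "lr_value q u v us vs (a#as) = lr_value q u v us vs as
     + (u * inverse q * a * inverse q ^ length as + v * q * q ^ length as)
     * (us * q ^ length as + vs * q^2 * inverse a * inverse q ^ length as)"

fun rl_value :: "'a::field \<Rightarrow> 'a \<Rightarrow> 'a \<Rightarrow> 'a \<Rightarrow> 'a \<Rightarrow> 'a list \<Rightarrow> 'a" where
  "rl_value q u v us vs [] = 0"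
| "rl_value q u v us vs (a#as) = rl_value q u v us vs as
     + (us * inverse q ^ length as + vs * q^2 * inverse a * q ^ length as)
     * (u * inverse q * a * q ^ length as + v * q * inverse q ^ length as)"

lemma LR_top:
  assumes "q \<noteq> 0"
  shows "Lop q as us vs (Rop q as u v (extremal as True))
    = (\<lambda>w. lr_value q u v us vs as * extremal as True w)"
proof (induction as)
  case Nil then show ?case by (simp add: Lop_Nil)
next
  case (Cons a as)
  let ?X = "extremal as True" and ?n = "length as"
  define k where "k = u * inverse q * a * inverse q ^ ?n + v * q * q ^ ?n"
  have R: "Rop q (a#as) u v (split_vec ?X (\<lambda>w. 0)) = split_vec (Rop q as u v ?X) (\<lambda>w. k * ?X w)"
    using assms by (simp add: Rop_split K0_extremal K1_extremal k_def fun_eq_iff algebra_simps)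
  have L: "Lop q (a#as) us vs (split_vec (Rop q as u v ?X) (\<lambda>w. k * ?X w)) =
     split_vec (\<lambda>w. (lr_value q u v us vs as + k * (us * q ^ ?n + vs * q^2 * inverse a * inverse q ^ ?n))
                     * ?X w) (\<lambda>w. 0)"
    unfolding Lop_split[OF assms] Lop_scale lin_scale K0_extremal K1_extremal Lop_top[OF assms] Cons.IH
    by (simp add: fun_eq_iff algebra_simps)
  show ?case
    unfolding length_Cons replicate_Suc delta_replicate_Cons R L split_vec_scale by (simp add: k_def)
qed

lemma RL_bottom:
  assumes "q \<noteq> 0"
  shows "Rop q as u v (Lop q as us vs (extremal as False))
    = (\<lambda>w. rl_value q u v us vs as * extremal as False w)"
proof (induction as)
  case Nil then show ?case by (simp add: Rop_Nil)
next
  case (Cons a as)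
  let ?Y = "extremal as False" and ?n = "length as"
  define k where "k = us * inverse q ^ ?n + vs * q^2 * inverse a * q ^ ?n"
  have L: "Lop q (a#as) us vs (split_vec (\<lambda>w. 0) ?Y) = split_vec (\<lambda>w. k * ?Y w) (Lop q as us vs ?Y)"
    using assms by (simp add: Lop_split K0_extremal K1_extremal k_def fun_eq_iff algebra_simps)
  have R: "Rop q (a#as) u v (split_vec (\<lambda>w. k * ?Y w) (Lop q as us vs ?Y)) =
     split_vec (\<lambda>w. 0)
       (\<lambda>w. (rl_value q u v us vs as + k * (u * inverse q * a * q ^ ?n + v * q * inverse q ^ ?n)) * ?Y w)"
    unfolding Rop_split[OF assms] Rop_scale lin_scale K0_extremal K1_extremal Rop_bottom[OF assms] Cons.IH
    by (simp add: fun_eq_iff algebra_simps)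
  show ?case
    unfolding length_Cons replicate_Suc delta_replicate_Cons L R split_vec_scale by (simp add: k_def)
qed

section \<open>Closed forms of the eigenvalues\<close>

text \<open>The boundary term  (P - P^-1)(bb q P^-1 + cc q^-1 P);  its increment under P := qP is
  what one tensor factor contributes, so the eigenvalues telescope.\<close>
definition boundary :: "'a::field \<Rightarrow> 'a \<Rightarrow> 'a \<Rightarrow> 'a \<Rightarrow> 'a" where
  "boundary q bb cc P = (P - inverse P) * (bb * q * inverse P + cc * P * inverse q)"

lemma boundary_step:
  fixes q P bb cc :: "'a::field"
  assumes "q \<noteq> 0" "P \<noteq> 0"
  shows "boundary q bb cc (q * P) - boundary q bb cc P = (q - inverse q) * (bb * inverse P ^ 2 + cc * P ^ 2)"
  using assms by (simp add: boundary_def field_simps power2_eq_square)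

text \<open>Closed form of both eigenvalues; for RL the roles of bb and cc are exchanged.\<close>
definition zeta_formula :: "'a::field \<Rightarrow> 'a \<Rightarrow> 'a \<Rightarrow> 'a \<Rightarrow> 'a \<Rightarrow> 'a \<Rightarrow> 'a \<Rightarrow> 'a list \<Rightarrow> 'a" where
  "zeta_formula q u v us vs bb cc as = u * us * inverse q * sum_list as + v * vs * q^3 * sum_list (map inverse as)
     - (q - inverse q) * boundary q bb cc (q ^ length as)"

lemma zeta_formula_Cons:
  "zeta_formula q u v us vs bb cc (a#as) = zeta_formula q u v us vs bb cc as
     + u * us * inverse q * a + v * vs * q^3 * inverse a
     - (q - inverse q) * (boundary q bb cc (q * q ^ length as) - boundary q bb cc (q ^ length as))"
  by (simp add: zeta_formula_def algebra_simps)

text \<open>The contribution of the first factor V(a) to LR on x0 (here P = q^n for the n further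
  factors): the cross terms are exactly where u v* and v u* enter.\<close>
lemma lr_contribution:
  fixes q P a u v us vs bb cc :: "'a::field"
  assumes "q \<noteq> 0" "P \<noteq> 0" "a \<noteq> 0"
    and "u * vs = - bb * inverse q * (q - inverse q)\<^sup>2"
    and "v * us = - cc * inverse q * (q - inverse q)\<^sup>2"
  shows "(u * inverse q * a * inverse P + v * q * P) * (us * P + vs * q^2 * inverse a * inverse P)
     = u * us * inverse q * a + v * vs * q^3 * inverse a
       - (q - inverse q) * (boundary q bb cc (q * P) - boundary q bb cc P)"
proof -
  have "(u * inverse q * a * inverse P + v * q * P) * (us * P + vs * q^2 * inverse a * inverse P)
     = u * us * inverse q * a + v * vs * q^3 * inverse a + q * (u * vs) * inverse P ^ 2 + q * (v * us) * P ^ 2"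
    using assms(1-3) by (simp add: field_simps power2_eq_square power3_eq_cube)
  also have "\<dots> = u * us * inverse q * a + v * vs * q^3 * inverse a
      - (q - inverse q)^2 * (bb * inverse P ^ 2 + cc * P ^ 2)"
    unfolding assms(4,5) using assms(1) by (simp add: field_simps)
  also have "\<dots> = u * us * inverse q * a + v * vs * q^3 * inverse a
      - (q - inverse q) * (boundary q bb cc (q * P) - boundary q bb cc P)"
    using assms(1,2) by (simp add: boundary_step power2_eq_square)
  finally show ?thesis .
qed

lemma rl_contribution:
  fixes q P a u v us vs bb cc :: "'a::field"
  assumes "q \<noteq> 0" "P \<noteq> 0" "a \<noteq> 0"
    and "u * vs = - bb * inverse q * (q - inverse q)\<^sup>2"
    and "v * us = - cc * inverse q * (q - inverse q)\<^sup>2"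
  shows "(us * inverse P + vs * q^2 * inverse a * P) * (u * inverse q * a * P + v * q * inverse P)
     = u * us * inverse q * a + v * vs * q^3 * inverse a
       - (q - inverse q) * (boundary q cc bb (q * P) - boundary q cc bb P)"
proof -
  have "(us * inverse P + vs * q^2 * inverse a * P) * (u * inverse q * a * P + v * q * inverse P)
     = u * us * inverse q * a + v * vs * q^3 * inverse a + q * (v * us) * inverse P ^ 2 + q * (u * vs) * P ^ 2"
    using assms(1-3) by (simp add: field_simps power2_eq_square power3_eq_cube)
  also have "\<dots> = u * us * inverse q * a + v * vs * q^3 * inverse a
      - (q - inverse q)^2 * (cc * inverse P ^ 2 + bb * P ^ 2)"
    unfolding assms(4,5) using assms(1) by (simp add: field_simps)
  also have "\<dots> = u * us * inverse q * a + v * vs * q^3 * inverse a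
      - (q - inverse q) * (boundary q cc bb (q * P) - boundary q cc bb P)"
    using assms(1,2) by (simp add: boundary_step power2_eq_square)
  finally show ?thesis .
qed

lemma lr_value_closed_form:
  fixes q u v us vs bb cc :: "'a::field"
  assumes "q \<noteq> 0"
    and "u * vs = - bb * inverse q * (q - inverse q)\<^sup>2"
    and "v * us = - cc * inverse q * (q - inverse q)\<^sup>2"
    and "\<forall>a\<in>set as. a \<noteq> 0"
  shows "lr_value q u v us vs as = zeta_formula q u v us vs bb cc as"
  using assms(4)
proof (induction as)
  case Nil then show ?case by (simp add: zeta_formula_def boundary_def)
next
  case (Cons a as)
  then have "a \<noteq> 0" by simp
  with Cons lr_contribution[OF assms(1) _ this assms(2,3), of "q ^ length as"] assms(1)
  show ?case by (simp add: zeta_formula_Cons power_inverse)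
qed

lemma rl_value_closed_form:
  fixes q u v us vs bb cc :: "'a::field"
  assumes "q \<noteq> 0"
    and "u * vs = - bb * inverse q * (q - inverse q)\<^sup>2"
    and "v * us = - cc * inverse q * (q - inverse q)\<^sup>2"
    and "\<forall>a\<in>set as. a \<noteq> 0"
  shows "rl_value q u v us vs as = zeta_formula q u v us vs cc bb as"
  using assms(4)
proof (induction as)
  case Nil then show ?case by (simp add: zeta_formula_def boundary_def)
next
  case (Cons a as)
  then have "a \<noteq> 0" by simp
  with Cons rl_contribution[OF assms(1) _ this assms(2,3), of "q ^ length as"] assms(1)
  show ?case by (simp add: zeta_formula_Cons power_inverse)
qed

lemma power_int_of_nat_forms:
  fixes q :: "'a::field" assumes "q \<noteq> 0"
  shows "q powi int n = q^n" "q powi (- int n) = inverse q ^ n"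
    "q powi (1 - int n) = q * inverse q ^ n" "q powi (int n - 1) = q ^ n * inverse q"
  using assms by (simp_all add: power_int_minus power_int_diff power_inverse divide_inverse)

theorem lemma7p17:
  fixes q b c bs cs u v us vs :: "'a::alg_closed_field"
    and as :: "'a list"
  assumes "q \<noteq> 0" and "q\<^sup>2 \<noteq> 1"
    and "b \<noteq> 0" and "c \<noteq> 0" and "bs \<noteq> 0" and "cs \<noteq> 0"
    and "u * vs = - b * bs * inverse q * (q - inverse q)\<^sup>2"
    and "v * us = - c * cs * inverse q * (q - inverse q)\<^sup>2"
    and "\<forall>a\<in>set as. a \<noteq> 0"
    and "length as \<ge> 1" and "feasible q (length as)"
  defines "d \<equiv> int (length as)"
  defines "x0 \<equiv> delta (replicate (length as) True)"
    and "yd \<equiv> delta (replicate (length as) False)"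
  defines "zeta1 \<equiv> u * us * inverse q * sum_list as + v * vs * q ^ 3 * sum_list (map inverse as)
            - (q - inverse q) * (q powi d - q powi (- d)) * (b * bs * q powi (1 - d) + c * cs * q powi (d - 1))"
    and "zeta1x \<equiv> u * us * inverse q * sum_list as + v * vs * q ^ 3 * sum_list (map inverse as)
            - (q - inverse q) * (q powi d - q powi (- d)) * (b * bs * q powi (d - 1) + c * cs * q powi (1 - d))"
  shows "Lop q as us vs (Rop q as u v x0) = (\<lambda>w. zeta1 * x0 w)
       \<and> Rop q as u v (Lop q as us vs yd) = (\<lambda>w. zeta1x * yd w)
       \<and> zeta1 - zeta1x = (q - inverse q) * (q powi (d - 1) - q powi (1 - d)) * (q powi d - q powi (- d)) * (b * bs - c * cs)"
proof -
  have uvs: "u * vs = - (b*bs) * inverse q * (q - inverse q)\<^sup>2"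
    and vus: "v * us = - (c*cs) * inverse q * (q - inverse q)\<^sup>2"
    using assms(7,8) by simp_all
  note powers = power_int_of_nat_forms[OF \<open>q \<noteq> 0\<close>]
  have "zeta1 = zeta_formula q u v us vs (b*bs) (c*cs) as"
    unfolding zeta1_def zeta_formula_def boundary_def d_def powers by (simp add: algebra_simps power_inverse)
  also have "\<dots> = lr_value q u v us vs as"
    using lr_value_closed_form[OF \<open>q \<noteq> 0\<close> uvs vus assms(9)] by simp
  finally have LR: "Lop q as us vs (Rop q as u v x0) = (\<lambda>w. zeta1 * x0 w)"
    unfolding x0_def LR_top[OF \<open>q \<noteq> 0\<close>] by simp
  have "zeta1x = zeta_formula q u v us vs (c*cs) (b*bs) as"
    unfolding zeta1x_def zeta_formula_def boundary_def d_def powers by (simp add: algebra_simps power_inverse)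
  also have "\<dots> = rl_value q u v us vs as"
    using rl_value_closed_form[OF \<open>q \<noteq> 0\<close> uvs vus assms(9)] by simp
  finally have RL: "Rop q as u v (Lop q as us vs yd) = (\<lambda>w. zeta1x * yd w)"
    unfolding yd_def RL_bottom[OF \<open>q \<noteq> 0\<close>] by simp
  have "zeta1 - zeta1x = (q - inverse q) * (q powi (d - 1) - q powi (1 - d)) * (q powi d - q powi (- d)) * (b * bs - c * cs)"
    unfolding zeta1_def zeta1x_def d_def powers by (simp add: algebra_simps)
  with LR RL show ?thesis by blast
qed

end
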